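(* For $\lambda\geq 1$ and any $n\ge1$, $Z=\sum_{\sigma\in\Omega}\lambda^{-p(\sigma)}\geq 0.12\cdot(1.67/\lambda)^{p_{max}}$, where $p_{max}=2n-2$.
   Context: Let $\Gamma$ be the triangular lattice. A configuration of $n$ particles is a set of $n$ vertices of $\Gamma$, considered up to translation. It is connected if the subgraph of $\Gamma$ induced by occupied vertices is connected; a hole is a maximal finite connected set of unoccupied vertices; $\Omega$ is the set of connected configurations of $n$ particles with no holes. For $\sigma\in\Omega$, $p(\sigma)$ is the length of the closed walk around its single external boundary, with an edge traversed twice counted twice. *)

theory Defs
  imports Complex_Main
begin

text \<open>Triangular lattice in axial coordinates: vertices are pairs of integers, and the six
  neighbour directions, listed in counterclockwise order (angles 0, 60, ..., 300 degrees in the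
  standard embedding (q,r) maps to (q + r/2, r*sqrt 3/2)), are given by tri_dir 0, ..., tri_dir 5.\<close>

type_synonym vertex = "int \<times> int"

definition vadd :: "vertex \<Rightarrow> vertex \<Rightarrow> vertex" where
  "vadd a b = (fst a + fst b, snd a + snd b)"

definition tri_dir :: "nat \<Rightarrow> vertex" where
  "tri_dir k = (case k mod 6 of
      0 \<Rightarrow> (1, 0) | Suc 0 \<Rightarrow> (0, 1) | Suc (Suc 0) \<Rightarrow> (-1, 1)
    | Suc (Suc (Suc 0)) \<Rightarrow> (-1, 0) | Suc (Suc (Suc (Suc 0))) \<Rightarrow> (0, -1)
    | _ \<Rightarrow> (1, -1))"

definition tri_adj :: "vertex \<Rightarrow> vertex \<Rightarrow> bool" where
  "tri_adj x y \<longleftrightarrow> (\<exists>k<6. y = vadd x (tri_dir k))"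

definition conf_connected :: "vertex set \<Rightarrow> bool" where
  "conf_connected S \<longleftrightarrow>
     (\<forall>x\<in>S. \<forall>y\<in>S. (x, y) \<in> {(a, b). a \<in> S \<and> b \<in> S \<and> tri_adj a b}\<^sup>*)"

text \<open>A hole is a maximal finite connected set of unoccupied vertices, i.e. a finite connected
  component of the subgraph induced by the unoccupied vertices.  No holes: every such component
  is infinite.\<close>
definition hole_free :: "vertex set \<Rightarrow> bool" where
  "hole_free S \<longleftrightarrow>
     (\<forall>x. x \<notin> S \<longrightarrow>
        infinite {y. (x, y) \<in> {(a, b). a \<notin> S \<and> b \<notin> S \<and> tri_adj a b}\<^sup>*})"

text \<open>A dart is a directed edge (u,v).  At v, coming from u, the walk continues
  to the first occupied neighbour of v found by rotating clockwise from the direction of u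
  (ending with u itself, i.e. backtracking, if there is no other). This traces the face on the
  left of each dart.\<close>
definition dir_idx :: "vertex \<Rightarrow> vertex \<Rightarrow> nat" where
  "dir_idx v u = (THE k. k < 6 \<and> u = vadd v (tri_dir k))"

definition next_dart :: "vertex set \<Rightarrow> vertex \<times> vertex \<Rightarrow> vertex \<times> vertex" where
  "next_dart S d = (let u = fst d; v = snd d; k = dir_idx v u;
      j = (LEAST j. 1 \<le> j \<and> j \<le> 6 \<and> vadd v (tri_dir ((k + 6 - j) mod 6)) \<in> S)
    in (v, vadd v (tri_dir ((k + 6 - j) mod 6))))"

text \<open>Lowest occupied vertex (minimal r, then minimal q); it lies on the external boundary,
  and its downward directions (indices 3,4,5) point into the outer face.\<close>
definition lowest :: "vertex set \<Rightarrow> vertex" where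
  "lowest S = (THE u. u \<in> S \<and> (\<forall>v\<in>S. snd u < snd v \<or> (snd u = snd v \<and> fst u \<le> fst v)))"

text \<open>The first dart of the external boundary walk: leave the lowest vertex towards the first
  occupied neighbour found rotating clockwise from the (empty, exterior) direction 4.\<close>
definition start_dart :: "vertex set \<Rightarrow> vertex \<times> vertex" where
  "start_dart S = next_dart S (vadd (lowest S) (tri_dir 4), lowest S)"

text \<open>Perimeter p: length of the closed walk around the external boundary (number of darts
  until it closes up); edges traversed twice are counted twice. A single particle has p = 0.\<close>
definition perimeter :: "vertex set \<Rightarrow> nat" where
  "perimeter S = (if card S \<le> 1 then 0
     else (LEAST k. 0 < k \<and> (next_dart S ^^ k) (start_dart S) = start_dart S))"

definition translate :: "vertex \<Rightarrow> vertex set \<Rightarrow> vertex set" where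
  "translate w S = (\<lambda>x. vadd x w) ` S"

definition Omega :: "nat \<Rightarrow> vertex set set set" where
  "Omega n = {C. \<exists>S. C = {translate w S | w. True} \<and> finite S \<and> card S = n
                   \<and> conf_connected S \<and> hole_free S}"

definition perim_class :: "vertex set set \<Rightarrow> nat" where
  "perim_class C = perimeter (SOME S. S \<in> C)"

end

theory Submission
  imports Defs "HOL-Library.Product_Lexorder"
begin

text \<open>The boundary walk is a permutation of the darts (directed edges) of a configuration, so the
  perimeter is at most twice the number of edges; for a configuration that is a tree this is 2n - 2.
  Words over {0, 1, 2} of length n - 1 build pairwise distinct hole-free trees column by column
  (0 extends the current column, 1 and 2 start the next column below or at the top of it), so
  Z \<ge> 3^(n-1) / \<lambda>^(2n-2), and 3 \<ge> 1.67^2.\<close>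

lemma tri_dir_simps [simp]:
  "tri_dir 0 = (1, 0)" "tri_dir 1 = (0, 1)" "tri_dir (Suc 0) = (0, 1)" "tri_dir 2 = (-1, 1)"
  "tri_dir 3 = (-1, 0)" "tri_dir 4 = (0, -1)" "tri_dir 5 = (1, -1)"
  by (simp_all add: tri_dir_def)

lemma less_6_cases: "(k::nat) < 6 \<longleftrightarrow> k = 0 \<or> k = 1 \<or> k = 2 \<or> k = 3 \<or> k = 4 \<or> k = 5"
  by auto

lemma ex_less_6: "(\<exists>k<6. P k) \<longleftrightarrow> P 0 \<or> P 1 \<or> P 2 \<or> P 3 \<or> P 4 \<or> P (5::nat)"
  unfolding less_6_cases by blast

lemma vadd_pair [simp]: "vadd (a, b) (c, d) = (a + c, b + d)"
  by (simp add: vadd_def)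

lemma vadd_left_cancel [simp]: "vadd v a = vadd v b \<longleftrightarrow> a = b"
  by (cases a; cases b) (auto simp: vadd_def)

lemma vadd_right_cancel [simp]: "vadd a t = vadd b t \<longleftrightarrow> a = b"
  by (cases a; cases b) (auto simp: vadd_def)

lemma tri_adj_iff:
  "tri_adj (a1, a2) (b1, b2) \<longleftrightarrow>
     b1 = a1 + 1 \<and> b2 = a2 \<or> b1 = a1 \<and> b2 = a2 + 1 \<or> b1 = a1 - 1 \<and> b2 = a2 + 1 \<or>
     b1 = a1 - 1 \<and> b2 = a2 \<or> b1 = a1 \<and> b2 = a2 - 1 \<or> b1 = a1 + 1 \<and> b2 = a2 - 1"
  by (simp add: tri_adj_def ex_less_6)

lemma tri_adj_sym: "tri_adj a b \<longleftrightarrow> tri_adj b a"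
  by (cases a; cases b) (auto simp: tri_adj_iff)

lemma tri_adj_irrefl [simp]: "\<not> tri_adj a a"
  by (cases a) (simp add: tri_adj_iff)

lemma tri_adj_translate [simp]: "tri_adj (vadd a t) (vadd b t) \<longleftrightarrow> tri_adj a b"
  by (cases a; cases b; cases t) (simp add: tri_adj_iff)

lemma tri_adj_vadd_tri_dir [simp]: "k < 6 \<Longrightarrow> tri_adj v (vadd v (tri_dir k))"
  unfolding tri_adj_def by blast

lemma tri_dir_inj: "k < 6 \<Longrightarrow> j < 6 \<Longrightarrow> tri_dir k = tri_dir j \<Longrightarrow> k = j"
  unfolding less_6_cases by auto

lemma dir_idx_vadd_tri_dir: "k < 6 \<Longrightarrow> dir_idx v (vadd v (tri_dir k)) = k"
  unfolding dir_idx_def by (rule the_equality) (auto dest: tri_dir_inj)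

definition darts :: "vertex set \<Rightarrow> (vertex \<times> vertex) set" where
  "darts S = {(a, b). a \<in> S \<and> b \<in> S \<and> tri_adj a b}"

lemma finite_darts: "finite S \<Longrightarrow> finite (darts S)"
  by (rule finite_subset[of _ "S \<times> S"]) (auto simp: darts_def)

lemma conf_connected_darts: "conf_connected S \<longleftrightarrow> (\<forall>x\<in>S. \<forall>y\<in>S. (x, y) \<in> (darts S)\<^sup>*)"
  by (simp add: conf_connected_def darts_def)

lemma clockwise_search_found:
  fixes P :: "nat \<Rightarrow> bool"
  assumes "k < d" "i < d" "P i"
  defines "J \<equiv> LEAST j. 1 \<le> j \<and> j \<le> d \<and> P ((k + d - j) mod d)"
  shows "1 \<le> J \<and> J \<le> d \<and> P ((k + d - J) mod d)"
  unfolding J_def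
proof (rule LeastI)
  define r where "r = (d + i - k) mod d"
  have "r < d" using assms(1) by (simp add: r_def)
  have "(k + d - (d - r)) mod d = (k + (d + i - k)) mod d"
    using \<open>r < d\<close> by (simp add: r_def mod_add_right_eq)
  also have "\<dots> = i" using assms(1,2) by simp
  finally show "1 \<le> d - r \<and> d - r \<le> d \<and> P ((k + d - (d - r)) mod d)"
    using \<open>r < d\<close> assms(3) by simp
qed

text \<open>Searching clockwise from direction k for the first occupied direction m, and then
  counterclockwise from m, leads back to k: the search can be undone.\<close>
lemma clockwise_search_reversible:
  fixes P :: "nat \<Rightarrow> bool"
  assumes k: "k < d" "P k"
  defines "J \<equiv> LEAST j. 1 \<le> j \<and> j \<le> d \<and> P ((k + d - j) mod d)"
  defines "m \<equiv> (k + d - J) mod d"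
  shows "k = (m + (LEAST j. 1 \<le> j \<and> j \<le> d \<and> P ((m + j) mod d))) mod d"
proof -
  have J: "1 \<le> J" "J \<le> d" using clockwise_search_found[of k d k P, OF k(1) k] unfolding J_def by auto
  have shift: "(m + j) mod d = (k + d - (J - j)) mod d" if "j \<le> J" for j
    using that J by (simp add: m_def mod_add_left_eq)
  have "(LEAST j. 1 \<le> j \<and> j \<le> d \<and> P ((m + j) mod d)) = J"
  proof (rule Least_equality)
    show "1 \<le> J \<and> J \<le> d \<and> P ((m + J) mod d)"
      using J k shift[of J] by simp
    show "J \<le> j" if "1 \<le> j \<and> j \<le> d \<and> P ((m + j) mod d)" for j
    proof (rule ccontr)
      assume "\<not> J \<le> j"
      then have "1 \<le> J - j" "J - j \<le> d" using J by auto
      moreover have "P ((k + d - (J - j)) mod d)" using that shift[of j] \<open>\<not> J \<le> j\<close> by simp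
      ultimately have "1 \<le> J - j \<and> J - j \<le> d \<and> P ((k + d - (J - j)) mod d)" by blast
      then have "J \<le> J - j" unfolding J_def by (rule Least_le)
      then show False using that \<open>\<not> J \<le> j\<close> by auto
    qed
  qed
  then show ?thesis using J k shift[of J] by simp
qed

lemma next_dart_vadd_tri_dir:
  "k < 6 \<Longrightarrow> next_dart S (vadd v (tri_dir k), v) =
     (v, vadd v (tri_dir ((k + 6 -
        (LEAST j. 1 \<le> j \<and> j \<le> 6 \<and> vadd v (tri_dir ((k + 6 - j) mod 6)) \<in> S)) mod 6)))"
  by (simp add: next_dart_def dir_idx_vadd_tri_dir)

lemma tri_adj_obtain_dir:
  assumes "tri_adj v w" obtains k where "k < 6" "w = vadd v (tri_dir k)"
  using assms unfolding tri_adj_def by blast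

lemma next_dart_mem_darts:
  assumes "k < 6" "v \<in> S" "w \<in> S" "tri_adj v w"
  shows "next_dart S (vadd v (tri_dir k), v) \<in> darts S"
proof -
  obtain i where "i < 6" "w = vadd v (tri_dir i)" using assms(4) by (rule tri_adj_obtain_dir)
  then show ?thesis
    using clockwise_search_found[of k 6 i "\<lambda>i. vadd v (tri_dir i) \<in> S"] assms
    by (simp add: next_dart_vadd_tri_dir darts_def)
qed

lemma dart_obtain_dir:
  assumes "(u, v) \<in> darts S" obtains k where "k < 6" "u = vadd v (tri_dir k)" "u \<in> S" "v \<in> S"
  using assms tri_adj_sym unfolding darts_def by (blast elim: tri_adj_obtain_dir)

lemma next_dart_maps_darts: "d \<in> darts S \<Longrightarrow> next_dart S d \<in> darts S"
  by (cases d) (metis dart_obtain_dir next_dart_mem_darts tri_adj_vadd_tri_dir)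

lemma inj_on_next_dart: "inj_on (next_dart S) (darts S)"
proof (rule inj_onI)
  fix d1 d2 assume d1: "d1 \<in> darts S" and d2: "d2 \<in> darts S"
    and eq: "next_dart S d1 = next_dart S d2"
  obtain k1 v1 where k1: "k1 < 6" "d1 = (vadd v1 (tri_dir k1), v1)" "vadd v1 (tri_dir k1) \<in> S"
    using d1 by (cases d1) (auto elim: dart_obtain_dir)
  obtain k2 v2 where k2: "k2 < 6" "d2 = (vadd v2 (tri_dir k2), v2)" "vadd v2 (tri_dir k2) \<in> S"
    using d2 by (cases d2) (auto elim: dart_obtain_dir)
  define P where "P i \<longleftrightarrow> vadd v1 (tri_dir i) \<in> S" for i
  define J where "J k = (LEAST j. 1 \<le> j \<and> j \<le> 6 \<and> P ((k + 6 - j) mod 6))" for k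
  define turn_back where
    "turn_back m = (m + (LEAST j. 1 \<le> j \<and> j \<le> 6 \<and> P ((m + j) mod 6))) mod 6" for m
  have v: "v1 = v2" using eq k1 k2 by (simp add: next_dart_vadd_tri_dir)
  then have "tri_dir ((k1 + 6 - J k1) mod 6) = tri_dir ((k2 + 6 - J k2) mod 6)"
    using eq k1 k2 by (simp add: next_dart_vadd_tri_dir P_def J_def)
  then have "(k1 + 6 - J k1) mod 6 = (k2 + 6 - J k2) mod 6" by (rule tri_dir_inj[rotated 2]) auto
  moreover have "k1 = turn_back ((k1 + 6 - J k1) mod 6)"
    using clockwise_search_reversible[of k1 6 P] k1 unfolding turn_back_def J_def P_def by simp
  moreover have "k2 = turn_back ((k2 + 6 - J k2) mod 6)"
    using clockwise_search_reversible[of k2 6 P] k2 v unfolding turn_back_def J_def P_def by simp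
  ultimately have "k1 = k2" by simp
  then show "d1 = d2" using k1 k2 v by simp
qed

lemma bij_betw_next_dart:
  assumes "finite S" shows "bij_betw (next_dart S) (darts S) (darts S)"
proof -
  have "next_dart S ` darts S \<subseteq> darts S" using next_dart_maps_darts by blast
  then show ?thesis
    using endo_inj_surj[OF finite_darts[OF assms] _ inj_on_next_dart] inj_on_next_dart
    unfolding bij_betw_def by blast
qed

lemma bij_betw_funpow_return:
  assumes "finite D" "bij_betw f D D" "x \<in> D"
  shows "\<exists>k. 0 < k \<and> k \<le> card D \<and> (f ^^ k) x = x"
proof -
  have into: "(f ^^ i) x \<in> D" for i
    using bij_betw_funpow[OF assms(2)] assms(3) by (auto dest: bij_betw_apply)
  have "\<not> inj_on (\<lambda>i. (f ^^ i) x) {0..card D}"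
  proof
    assume "inj_on (\<lambda>i. (f ^^ i) x) {0..card D}"
    then have "card {0..card D} \<le> card D"
      using into assms(1) by (intro card_inj_on_le) auto
    then show False by simp
  qed
  then obtain i j where ij: "i < j" "j \<le> card D" "(f ^^ i) x = (f ^^ j) x"
    unfolding inj_on_def by (metis atLeastAtMost_iff linorder_neqE_nat)
  have "(f ^^ i) ((f ^^ (j - i)) x) = (f ^^ (i + (j - i))) x" by (simp add: funpow_add)
  then have "(f ^^ i) ((f ^^ (j - i)) x) = (f ^^ i) x" using ij by simp
  then have "(f ^^ (j - i)) x = x"
    using bij_betw_funpow[OF assms(2), of i] into assms(3) by (auto dest: bij_betw_imp_inj_on inj_onD)
  then show ?thesis using ij by (intro exI[of _ "j - i"]) auto
qed

lemma lowest_mem: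
  assumes "finite S" "S \<noteq> {}" shows "lowest S \<in> S"
proof -
  have lex: "snd w < snd v \<or> (snd w = snd v \<and> fst w \<le> fst v) \<longleftrightarrow> prod.swap w \<le> prod.swap v"
    for w v :: vertex
    by (auto simp: less_eq_prod_def)
  define u where "u = prod.swap (Min (prod.swap ` S))"
  have "Min (prod.swap ` S) \<in> prod.swap ` S" using assms by simp
  then have u: "u \<in> S" by (force simp: u_def)
  have "lowest S = u"
    unfolding lowest_def lex
  proof (rule the_equality)
    show "u \<in> S \<and> (\<forall>v\<in>S. prod.swap u \<le> prod.swap v)"
      using u assms(1) by (simp add: u_def)
    show "w = u" if "w \<in> S \<and> (\<forall>v\<in>S. prod.swap w \<le> prod.swap v)" for w
    proof -
      have "prod.swap w = Min (prod.swap ` S)"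
        using that assms(1) by (intro Min_eqI[symmetric]) auto
      then show ?thesis unfolding u_def by (metis swap_swap)
    qed
  qed
  then show ?thesis using u by simp
qed

lemma conf_connected_has_neighbour:
  assumes "conf_connected S" "v \<in> S" "w \<in> S" "v \<noteq> w"
  obtains z where "z \<in> S" "tri_adj v z"
proof -
  have "(v, w) \<in> (darts S)\<^sup>*" using assms(1-3) by (simp add: conf_connected_darts)
  then show ?thesis using assms(4) that by (cases rule: converse_rtranclE) (auto simp: darts_def)
qed

text \<open>The external boundary walk is one cycle of the permutation next_dart of the darts.\<close>
lemma perimeter_le_card_darts:
  assumes fin: "finite S" and conn: "conf_connected S"
  shows "perimeter S \<le> card (darts S)"
proof (cases "card S \<le> 1")
  case True then show ?thesis by (simp add: perimeter_def)
next
  case False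
  then have "S \<noteq> {}" by auto
  then have L: "lowest S \<in> S" by (rule lowest_mem[OF fin])
  have "\<not> S \<subseteq> {lowest S}" using False card_mono[of "{lowest S}" S] by auto
  then obtain w where "w \<in> S" "w \<noteq> lowest S" by blast
  then obtain z where "z \<in> S" "tri_adj (lowest S) z"
    using conf_connected_has_neighbour[OF conn L] by blast
  then have "start_dart S \<in> darts S"
    unfolding start_dart_def using L by (intro next_dart_mem_darts) auto
  then obtain k where k: "0 < k" "k \<le> card (darts S)" "(next_dart S ^^ k) (start_dart S) = start_dart S"
    using bij_betw_funpow_return[OF finite_darts[OF fin] bij_betw_next_dart[OF fin]] by blast
  have "perimeter S \<le> k"
    unfolding perimeter_def using False k by (auto intro: Least_le)
  then show ?thesis using k(2) by simp
qed

lemma tri_adj_columns: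
  "tri_adj (a, b) (c, d) \<Longrightarrow>
     c = a + 1 \<and> (d = b \<or> d = b - 1) \<or> c = a \<and> (d = b + 1 \<or> d = b - 1) \<or>
     c = a - 1 \<and> (d = b \<or> d = b + 1)"
  by (auto simp: tri_adj_iff)

definition column_convex :: "vertex set \<Rightarrow> bool" where
  "column_convex S \<longleftrightarrow>
     (\<forall>c y1 y2 y. (c, y1) \<in> S \<longrightarrow> (c, y2) \<in> S \<longrightarrow> y1 \<le> y \<longrightarrow> y \<le> y2 \<longrightarrow> (c, y) \<in> S)"

lemma column_convex_insert:
  assumes conv: "column_convex S" and col: "\<And>y. (c, y) \<in> insert (c, y0) S \<longleftrightarrow> a \<le> y \<and> y \<le> b"
  shows "column_convex (insert (c, y0) S)"
  unfolding column_convex_def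
proof (intro allI impI)
  fix c' y1 y2 y
  assume y: "(c', y1) \<in> insert (c, y0) S" "(c', y2) \<in> insert (c, y0) S" "y1 \<le> y" "y \<le> y2"
  show "(c', y) \<in> insert (c, y0) S"
  proof (cases "c' = c")
    case True then show ?thesis using y col by auto
  next
    case False then show ?thesis using y conv unfolding column_convex_def by blast
  qed
qed

text \<open>A state (S, q, lo, hi, up) records the occupied set S, whose last column q is occupied exactly
  in the rows lo..hi and grows upwards iff up. The vertex added by a letter has exactly one occupied
  neighbour, its anchor.\<close>
type_synonym growth_state = "vertex set \<times> int \<times> int \<times> int \<times> bool"

definition grow_vertex :: "nat \<Rightarrow> growth_state \<Rightarrow> vertex" where
  "grow_vertex x = (\<lambda>(S, q, lo, hi, up).
     if x = 0 then (if up then (q, hi + 1) else (q, lo - 1))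
     else if x = 1 then (q + 1, lo - 1) else (q + 1, hi))"

definition grow_anchor :: "nat \<Rightarrow> growth_state \<Rightarrow> vertex" where
  "grow_anchor x = (\<lambda>(S, q, lo, hi, up).
     if x = 0 then (if up then (q, hi) else (q, lo))
     else if x = 1 then (q, lo) else (q, hi))"

definition grow :: "nat \<Rightarrow> growth_state \<Rightarrow> growth_state" where
  "grow x = (\<lambda>(S, q, lo, hi, up).
     if x = 0 then (if up then (insert (q, hi + 1) S, q, lo, hi + 1, True)
                    else (insert (q, lo - 1) S, q, lo - 1, hi, False))
     else if x = 1 then (insert (q + 1, lo - 1) S, q + 1, lo - 1, lo - 1, False)
     else (insert (q + 1, hi) S, q + 1, hi, hi, True))"

lemma grow_cases:
  obtains (extend_up) "x = 0" "up" "grow_vertex x (S, q, lo, hi, up) = (q, hi + 1)"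
      "grow_anchor x (S, q, lo, hi, up) = (q, hi)"
      "grow x (S, q, lo, hi, up) = (insert (q, hi + 1) S, q, lo, hi + 1, True)"
  | (extend_down) "x = 0" "\<not> up" "grow_vertex x (S, q, lo, hi, up) = (q, lo - 1)"
      "grow_anchor x (S, q, lo, hi, up) = (q, lo)"
      "grow x (S, q, lo, hi, up) = (insert (q, lo - 1) S, q, lo - 1, hi, False)"
  | (new_below) "x = 1" "grow_vertex x (S, q, lo, hi, up) = (q + 1, lo - 1)"
      "grow_anchor x (S, q, lo, hi, up) = (q, lo)"
      "grow x (S, q, lo, hi, up) = (insert (q + 1, lo - 1) S, q + 1, lo - 1, lo - 1, False)"
  | (new_above) "x \<noteq> 0" "x \<noteq> 1" "grow_vertex x (S, q, lo, hi, up) = (q + 1, hi)"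
      "grow_anchor x (S, q, lo, hi, up) = (q, hi)"
      "grow x (S, q, lo, hi, up) = (insert (q + 1, hi) S, q + 1, hi, hi, True)"
  by (cases "x = 0"; cases "x = 1"; cases up) (simp_all add: grow_vertex_def grow_anchor_def grow_def)

lemma fst_grow: "fst (grow x s) = insert (grow_vertex x s) (fst s)"
  by (cases s) (simp add: grow_def grow_vertex_def)

definition growth_inv :: "growth_state \<Rightarrow> bool" where
  "growth_inv = (\<lambda>(S, q, lo, hi, up).
     finite S \<and> column_convex S \<and> lo \<le> hi \<and> (0, 0) \<in> S \<and> (\<forall>v\<in>S. (0, 0) \<le> v \<and> fst v \<le> q) \<and>
     (\<forall>y. (q, y) \<in> S \<longleftrightarrow> lo \<le> y \<and> y \<le> hi) \<and>
     (\<forall>y. (q - 1, y) \<in> S \<longrightarrow> (if up then y \<le> lo else hi < y)) \<and>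
     (q = 0 \<longrightarrow> up \<and> lo = 0))"

lemma grow_vertex_leaf:
  fixes x :: nat
  assumes inv: "growth_inv (S, q, lo, hi, up)"
  defines "p \<equiv> grow_vertex x (S, q, lo, hi, up)" and "a \<equiv> grow_anchor x (S, q, lo, hi, up)"
  shows "p \<notin> S" "a \<in> S" "\<And>z. z \<in> S \<Longrightarrow> tri_adj p z \<longleftrightarrow> z = a"
proof -
  have right: "c \<le> q" if "(c, d) \<in> S" for c d using inv that by (auto simp: growth_inv_def)
  have colq: "(q, y) \<in> S \<longleftrightarrow> lo \<le> y \<and> y \<le> hi" for y using inv by (simp add: growth_inv_def)
  have prev: "if up then y \<le> lo else hi < y" if "(q - 1, y) \<in> S" for y
    using inv that by (simp add: growth_inv_def)
  have lh: "lo \<le> hi" using inv by (simp add: growth_inv_def)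
  have "p \<notin> S \<and> a \<in> S \<and> (\<forall>c d. (c, d) \<in> S \<longrightarrow> tri_adj p (c, d) \<longrightarrow> (c, d) = a)"
    unfolding p_def a_def using colq lh
    by (cases rule: grow_cases[where x=x and S=S and q=q and lo=lo and hi=hi and up=up])
      (force dest!: tri_adj_columns dest: right prev)+
  moreover have "tri_adj p a"
    unfolding p_def a_def
    by (cases rule: grow_cases[where x=x and S=S and q=q and lo=lo and hi=hi and up=up])
      (simp_all add: tri_adj_iff)
  ultimately show "p \<notin> S" "a \<in> S" "\<And>z. z \<in> S \<Longrightarrow> tri_adj p z \<longleftrightarrow> z = a" by auto
qed

lemma growth_inv_grow:
  assumes inv: "growth_inv s" shows "growth_inv (grow x s)"
proof -
  obtain S q lo hi up where s: "s = (S, q, lo, hi, up)" by (cases s)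
  have fin: "finite S" and conv: "column_convex S" and lh: "lo \<le> hi" and o: "(0, 0) \<in> S"
    and low: "\<And>v. v \<in> S \<Longrightarrow> (0, 0) \<le> v" and right: "\<And>v. v \<in> S \<Longrightarrow> fst v \<le> q"
    and colq: "\<And>y. (q, y) \<in> S \<longleftrightarrow> lo \<le> y \<and> y \<le> hi"
    and prev: "\<And>y. (q - 1, y) \<in> S \<Longrightarrow> (if up then y \<le> lo else hi < y)"
    and first: "q = 0 \<Longrightarrow> up \<and> lo = 0"
    using inv by (auto simp: s growth_inv_def)
  have q0: "0 \<le> q" using low[OF o] right[OF o] by simp
  have "(0, 0) \<le> (q, lo)" using low colq lh by blast
  then have qlo: "0 < q \<or> 0 \<le> lo" by auto
  have down: "0 < q" if "\<not> up" using first q0 that by force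
  have right1: "\<forall>v\<in>S. fst v \<le> q + 1" using right by force
  have newcol: "(q + 1, y) \<notin> S" for y using right by force
  show ?thesis
  proof (cases rule: grow_cases[where x=x and S=S and q=q and lo=lo and hi=hi and up=up])
    case extend_up
    have col: "(q, y) \<in> insert (q, hi + 1) S \<longleftrightarrow> lo \<le> y \<and> y \<le> hi + 1" for y
      using colq[of y] lh by auto
    show ?thesis
      using extend_up fin lh o low right prev first q0 qlo column_convex_insert[OF conv col] col
      by (auto simp: s growth_inv_def)
  next
    case extend_down
    have col: "(q, y) \<in> insert (q, lo - 1) S \<longleftrightarrow> lo - 1 \<le> y \<and> y \<le> hi" for y
      using colq[of y] lh by auto
    show ?thesis
      using extend_down fin lh o low right prev down column_convex_insert[OF conv col] col
      by (auto simp: s growth_inv_def)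
  next
    case new_below
    have col: "(q + 1, y) \<in> insert (q + 1, lo - 1) S \<longleftrightarrow> lo - 1 \<le> y \<and> y \<le> lo - 1" for y
      using newcol[of y] by auto
    show ?thesis
      using new_below fin o low right1 colq q0 column_convex_insert[OF conv col] col
      by (auto simp: s growth_inv_def)
  next
    case new_above
    have col: "(q + 1, y) \<in> insert (q + 1, hi) S \<longleftrightarrow> hi \<le> y \<and> y \<le> hi" for y
      using newcol[of y] by auto
    show ?thesis
      using new_above fin o low right1 colq q0 column_convex_insert[OF conv col] col
      by (auto simp: s growth_inv_def)
  qed
qed

lemma darts_insert_leaf:
  assumes "p \<notin> S" "a \<in> S" "\<And>z. z \<in> S \<Longrightarrow> tri_adj p z \<longleftrightarrow> z = a"
  shows "darts (insert p S) = insert (p, a) (insert (a, p) (darts S))"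
  using assms tri_adj_sym[of p] by (auto simp: darts_def)

lemma card_darts_insert_leaf:
  assumes "finite S" "p \<notin> S" "a \<in> S" "\<And>z. z \<in> S \<Longrightarrow> tri_adj p z \<longleftrightarrow> z = a"
  shows "card (darts (insert p S)) = card (darts S) + 2"
proof -
  have "(p, a) \<notin> darts S" "(a, p) \<notin> darts S" "p \<noteq> a" using assms(2,3) by (auto simp: darts_def)
  then show ?thesis
    using finite_darts[OF assms(1)] by (simp add: darts_insert_leaf[OF assms(2-4)])
qed

lemma conf_connected_insert_leaf:
  assumes conn: "conf_connected S" and a: "a \<in> S" "tri_adj p a"
  shows "conf_connected (insert p S)"
proof -
  let ?D = "darts (insert p S)"
  have mono: "(darts S)\<^sup>* \<subseteq> ?D\<^sup>*" by (rule rtrancl_mono) (auto simp: darts_def)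
  have edges: "(p, a) \<in> ?D" "(a, p) \<in> ?D" using a tri_adj_sym by (auto simp: darts_def)
  have "(x, a) \<in> ?D\<^sup>* \<and> (a, x) \<in> ?D\<^sup>*" if "x \<in> insert p S" for x
    using that conn a(1) mono edges by (auto simp: conf_connected_darts)
  then show ?thesis
    unfolding conf_connected_darts by (meson rtrancl_trans)
qed

definition grow_start :: growth_state where
  "grow_start = ({(0, 0)}, 0, 0, 0, True)"

definition column_tree :: "nat list \<Rightarrow> vertex set" where
  "column_tree w = fst (fold grow w grow_start)"

lemma growth_inv_grow_start: "growth_inv grow_start"
  by (auto simp: grow_start_def growth_inv_def column_convex_def)

lemma growth_inv_fold_grow: "growth_inv s \<Longrightarrow> growth_inv (fold grow w s)"
  by (induction w arbitrary: s) (simp_all add: growth_inv_grow)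

lemma fold_grow_adds_leaves:
  "growth_inv s \<Longrightarrow>
     card (fst (fold grow w s)) = card (fst s) + length w \<and>
     card (darts (fst (fold grow w s))) = card (darts (fst s)) + 2 * length w \<and>
     (conf_connected (fst s) \<longrightarrow> conf_connected (fst (fold grow w s)))"
proof (induction w arbitrary: s)
  case (Cons x w)
  obtain S q lo hi up where s: "s = (S, q, lo, hi, up)" by (cases s)
  note leaf = grow_vertex_leaf[OF Cons.prems[unfolded s], where x=x]
  have fin: "finite S" using Cons.prems by (simp add: s growth_inv_def)
  have "fst (grow x s) = insert (grow_vertex x s) S" by (simp add: fst_grow s)
  then show ?case
    using Cons.IH[OF growth_inv_grow[OF Cons.prems]] leaf card_darts_insert_leaf[OF fin leaf]
      conf_connected_insert_leaf[of S _ "grow_vertex x s"]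
    by (auto simp: s fin)
qed simp

definition ahead :: "growth_state \<Rightarrow> vertex \<Rightarrow> bool" where
  "ahead = (\<lambda>(S, q, lo, hi, up) v. q < fst v \<or> fst v = q \<and> (if up then hi < snd v else snd v < lo))"

lemma ahead_grow_vertex: "ahead s (grow_vertex x s)"
  by (cases s) (simp add: ahead_def grow_vertex_def)

lemma ahead_grow: "ahead (grow x s) v \<Longrightarrow> ahead s v"
proof (cases s)
  case (fields S q lo hi up)
  then show "ahead (grow x s) v \<Longrightarrow> ahead s v"
    by (cases rule: grow_cases[where x=x and S=S and q=q and lo=lo and hi=hi and up=up])
      (auto simp: ahead_def)
qed

lemma fold_grow_ahead: "v \<in> fst (fold grow w s) \<Longrightarrow> v \<notin> fst s \<Longrightarrow> ahead s v"
proof (induction w arbitrary: s)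
  case (Cons x w)
  show ?case
  proof (cases "v = grow_vertex x s")
    case True then show ?thesis by (simp add: ahead_grow_vertex)
  next
    case False
    then have "ahead (grow x s) v" using Cons by (simp add: fst_grow)
    then show ?thesis by (rule ahead_grow)
  qed
qed simp

text \<open>Distinct letters lead to distinct trees, since the vertex added by the smaller letter is
  never added later on when the larger one is chosen.\<close>
lemma grow_vertex_notin_fold_grow:
  assumes inv: "growth_inv s" and "x < y" "y \<le> 2"
  shows "grow_vertex x s \<notin> fst (fold grow w (grow y s))"
proof
  obtain S q lo hi up where s: "s = (S, q, lo, hi, up)" by (cases s)
  have new: "grow_vertex x s \<notin> S" using grow_vertex_leaf[OF inv[unfolded s]] by (simp add: s)
  have lh: "lo \<le> hi" using inv by (simp add: s growth_inv_def)
  have "grow_vertex x s \<noteq> grow_vertex y s \<and> \<not> ahead (grow y s) (grow_vertex x s)"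
  proof (cases "y = 1")
    case True
    then have "x = 0" using \<open>x < y\<close> by simp
    then show ?thesis using True by (simp add: s grow_def grow_vertex_def ahead_def)
  next
    case False
    then have "y = 2" "x = 0 \<or> x = 1" using assms(2,3) by auto
    then show ?thesis using lh by (auto simp: s grow_def grow_vertex_def ahead_def)
  qed
  moreover assume "grow_vertex x s \<in> fst (fold grow w (grow y s))"
  ultimately show False
    using fold_grow_ahead[of "grow_vertex x s" w "grow y s"] new by (simp add: fst_grow s)
qed

lemma fst_fold_grow_mono: "fst s \<subseteq> fst (fold grow w s)"
proof (induction w arbitrary: s)
  case (Cons x w)
  have "fst s \<subseteq> fst (grow x s)" by (auto simp: fst_grow)
  with Cons.IH[of "grow x s"] show ?case by simp
qed simp

lemma fold_grow_first_letter:
  assumes "growth_inv s" "x < y" "y \<le> 2"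
  shows "fst (fold grow (x # u) s) \<noteq> fst (fold grow (y # v) s)"
proof -
  have "grow_vertex x s \<in> fst (fold grow (x # u) s)"
    using fst_fold_grow_mono[of "grow x s" u] by (simp add: fst_grow)
  then show ?thesis using grow_vertex_notin_fold_grow[OF assms] by auto
qed

lemma fold_grow_inj:
  assumes "growth_inv s" "length w1 = length w2" "set w1 \<subseteq> {..2}" "set w2 \<subseteq> {..2}"
    "fst (fold grow w1 s) = fst (fold grow w2 s)"
  shows "w1 = w2"
  using assms
proof (induction w1 arbitrary: s w2)
  case (Cons x w1)
  obtain y w2' where w2: "w2 = y # w2'" using Cons.prems(2) by (cases w2) auto
  have "x \<le> 2" "y \<le> 2" using Cons.prems(3,4) w2 by auto
  moreover have "\<not> x < y"
    using fold_grow_first_letter[OF Cons.prems(1), where x=x and y=y and u=w1 and v=w2']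
      Cons.prems(5) w2 \<open>y \<le> 2\<close> by auto
  moreover have "\<not> y < x"
    using fold_grow_first_letter[OF Cons.prems(1), where x=y and y=x and u=w2' and v=w1]
      Cons.prems(5) w2 \<open>x \<le> 2\<close> by auto
  ultimately have "x = y" by linarith
  then have "w1 = w2'"
    using Cons.IH[OF growth_inv_grow[OF Cons.prems(1)], of w2'] Cons.prems w2 by simp
  then show ?case using \<open>x = y\<close> w2 by simp
qed simp

lemma free_vertical_ray_infinite_component:
  assumes free: "\<And>k::nat. (c, y0 + e * int k) \<notin> S" and e: "e = 1 \<or> e = -1"
  shows "infinite {y. ((c, y0), y) \<in> {(a, b). a \<notin> S \<and> b \<notin> S \<and> tri_adj a b}\<^sup>*}"
proof -
  let ?R = "{(a, b). a \<notin> S \<and> b \<notin> S \<and> tri_adj a b}"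
  define ray where "ray k = (c, y0 + e * int k)" for k :: nat
  have reach: "((c, y0), ray k) \<in> ?R\<^sup>*" for k
  proof (induction k)
    case 0 then show ?case by (simp add: ray_def)
  next
    case (Suc k)
    have "tri_adj (c, y0 + e * int k) (c, y0 + (e + e * int k))" using e by (auto simp: tri_adj_iff)
    then have "(ray k, ray (Suc k)) \<in> ?R"
      using free[of k] free[of "Suc k"] by (simp add: ray_def distrib_left add.assoc)
    with Suc show ?case by (rule rtrancl_into_rtrancl)
  qed
  have "range ray \<subseteq> {y. ((c, y0), y) \<in> ?R\<^sup>*}" using reach by blast
  moreover have "inj ray" using e by (auto simp: ray_def inj_def)
  then have "infinite (range ray)" using finite_imageD[of ray UNIV] by auto
  ultimately show ?thesis by (rule infinite_super)
qed

lemma hole_free_column_convex: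
  assumes conv: "column_convex S" shows "hole_free S"
  unfolding hole_free_def
proof (intro allI impI)
  fix x assume "x \<notin> S"
  obtain c y0 where x: "x = (c, y0)" by (cases x)
  have "\<exists>e. (e = 1 \<or> e = -1) \<and> (\<forall>k::nat. (c, y0 + e * int k) \<notin> S)"
  proof (rule ccontr)
    assume "\<not> ?thesis"
    then have "\<not> (\<forall>k::nat. (c, y0 + 1 * int k) \<notin> S)" "\<not> (\<forall>k::nat. (c, y0 + (-1) * int k) \<notin> S)"
      by blast+
    then obtain k1 k2 :: nat where "(c, y0 + int k1) \<in> S" "(c, y0 - int k2) \<in> S" by auto
    moreover have "y0 - int k2 \<le> y0" "y0 \<le> y0 + int k1" by simp_all
    ultimately have "(c, y0) \<in> S" using conv unfolding column_convex_def by blast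
    then show False using \<open>x \<notin> S\<close> x by simp
  qed
  then obtain e where e: "e = 1 \<or> e = -1" and free: "\<And>k::nat. (c, y0 + e * int k) \<notin> S" by blast
  show "infinite {y. (x, y) \<in> {(a, b). a \<notin> S \<and> b \<notin> S \<and> tri_adj a b}\<^sup>*}"
    unfolding x using free e by (rule free_vertical_ray_infinite_component)
qed

lemma column_tree_facts:
  "finite (column_tree w)" "card (column_tree w) = length w + 1"
    "card (darts (column_tree w)) = 2 * length w" "conf_connected (column_tree w)"
    "hole_free (column_tree w)" "(0, 0) \<in> column_tree w" "\<forall>v\<in>column_tree w. (0, 0) \<le> v"
proof -
  have inv: "growth_inv (fold grow w grow_start)"
    by (rule growth_inv_fold_grow[OF growth_inv_grow_start])
  obtain S q lo hi up where s: "fold grow w grow_start = (S, q, lo, hi, up)"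
    by (cases "fold grow w grow_start")
  have S: "column_tree w = S" by (simp add: column_tree_def s)
  show "finite (column_tree w)" "hole_free (column_tree w)" "(0, 0) \<in> column_tree w"
    "\<forall>v\<in>column_tree w. (0, 0) \<le> v"
    using inv hole_free_column_convex by (auto simp: S s growth_inv_def)
  have "darts {(0, 0)} = {}" by (simp add: darts_def)
  moreover have "conf_connected {(0, 0)}" by (simp add: conf_connected_def)
  ultimately show "card (column_tree w) = length w + 1" "card (darts (column_tree w)) = 2 * length w"
    "conf_connected (column_tree w)"
    using fold_grow_adds_leaves[OF growth_inv_grow_start, of w]
    by (simp_all add: column_tree_def grow_start_def)
qed

lemma column_tree_inj:
  "length w1 = length w2 \<Longrightarrow> set w1 \<subseteq> {..2} \<Longrightarrow> set w2 \<subseteq> {..2} \<Longrightarrow>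
     column_tree w1 = column_tree w2 \<Longrightarrow> w1 = w2"
  unfolding column_tree_def by (rule fold_grow_inj[OF growth_inv_grow_start])

definition translation_class :: "vertex set \<Rightarrow> vertex set set" where
  "translation_class S = {translate w S | w. True}"

lemma Omega_eq:
  "Omega n = {translation_class S | S. finite S \<and> card S = n \<and> conf_connected S \<and> hole_free S}"
  by (auto simp: Omega_def translation_class_def)

lemma translate_zero [simp]: "translate (0, 0) S = S"
  by (simp add: translate_def vadd_def)

lemma translate_translate: "translate w (translate u S) = translate (vadd u w) S"
  by (simp add: translate_def image_image vadd_def add.assoc)

lemma mem_translation_class_self: "S \<in> translation_class S"
  unfolding translation_class_def by (rule CollectI, rule exI[of _ "(0, 0)"]) simp

lemma translation_class_translate: "translation_class (translate t S) = translation_class S"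
proof
  show "translation_class (translate t S) \<subseteq> translation_class S"
    unfolding translation_class_def using translate_translate by blast
  show "translation_class S \<subseteq> translation_class (translate t S)"
  proof
    fix X assume "X \<in> translation_class S"
    then obtain w where "X = translate w S" unfolding translation_class_def by blast
    moreover have "translate w S = translate (vadd (- fst t, - snd t) w) (translate t S)"
      by (cases t; cases w) (simp add: translate_translate)
    ultimately show "X \<in> translation_class (translate t S)" unfolding translation_class_def by blast
  qed
qed

lemma finite_translate: "finite S \<Longrightarrow> finite (translate t S)"
  by (simp add: translate_def)

lemma darts_translate: "darts (translate t S) = map_prod (\<lambda>x. vadd x t) (\<lambda>x. vadd x t) ` darts S"
proof (intro set_eqI iffI)
  fix d assume "d \<in> darts (translate t S)"
  then obtain a b where "(a, b) \<in> darts S" "d = (vadd a t, vadd b t)"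
    unfolding darts_def translate_def by auto
  then show "d \<in> map_prod (\<lambda>x. vadd x t) (\<lambda>x. vadd x t) ` darts S" by force
qed (auto simp: darts_def translate_def)

lemma card_darts_translate: "card (darts (translate t S)) = card (darts S)"
  unfolding darts_translate by (rule card_image) (auto intro: inj_onI)

lemma conf_connected_translate:
  assumes conn: "conf_connected S" shows "conf_connected (translate t S)"
  unfolding conf_connected_darts
proof (intro ballI)
  have shift: "(vadd x t, vadd y t) \<in> (darts (translate t S))\<^sup>*" if "(x, y) \<in> (darts S)\<^sup>*" for x y
    using that
  proof (induction rule: rtrancl_induct)
    case (step y z)
    then have "(vadd y t, vadd z t) \<in> darts (translate t S)" by (auto simp: darts_def translate_def)
    with step.IH show ?case by (rule rtrancl_into_rtrancl)
  qed simp
  fix x' y' assume "x' \<in> translate t S" "y' \<in> translate t S"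
  then obtain x y where "x \<in> S" "y \<in> S" "x' = vadd x t" "y' = vadd y t" unfolding translate_def by blast
  then show "(x', y') \<in> (darts (translate t S))\<^sup>*" using conn shift by (simp add: conf_connected_darts)
qed

lemma perim_class_le_card_darts:
  assumes "finite S" "conf_connected S"
  shows "perim_class (translation_class S) \<le> card (darts S)"
proof -
  have "(SOME T. T \<in> translation_class S) \<in> translation_class S"
    using mem_translation_class_self by (rule someI)
  then obtain t where "(SOME T. T \<in> translation_class S) = translate t S"
    unfolding translation_class_def by blast
  then have "perim_class (translation_class S) = perimeter (translate t S)"
    by (simp add: perim_class_def)
  also have "\<dots> \<le> card (darts (translate t S))"
    using assms by (intro perimeter_le_card_darts finite_translate conf_connected_translate)
  also have "\<dots> = card (darts S)" by (rule card_darts_translate)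
  finally show ?thesis .
qed

lemma translation_class_eq_normalised:
  assumes "translation_class A = translation_class B"
    and "(0, 0) \<in> A" "\<forall>v\<in>A. (0, 0) \<le> v" and "(0, 0) \<in> B" "\<forall>v\<in>B. (0, 0) \<le> v"
  shows "A = B"
proof -
  have "A \<in> translation_class B" using assms(1) mem_translation_class_self[of A] by simp
  then obtain t where A: "A = translate t B" unfolding translation_class_def by blast
  obtain t1 t2 where t: "t = (t1, t2)" by (cases t)
  have "vadd (0, 0) t \<in> A" using assms(4) unfolding A translate_def by blast
  then have "(0, 0) \<le> vadd (0, 0) t" using assms(3) by blast
  then have "(0, 0) \<le> (t1, t2)" by (simp add: t)
  obtain v where v: "v \<in> B" "vadd v t = (0, 0)" using assms(2) unfolding A translate_def by force
  then have "v = (- t1, - t2)" by (cases v) (simp add: t)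
  then have "(0, 0) \<le> (- t1, - t2)" using v(1) assms(5) by blast
  with \<open>(0, 0) \<le> (t1, t2)\<close> have "t = (0, 0)" by (auto simp: t)
  then show ?thesis using A by simp
qed

lemma relpow_tri_adj_dist:
  assumes "R \<subseteq> {(a, b). tri_adj a b}" "(a, b) \<in> R ^^ k"
  shows "\<bar>fst b - fst a\<bar> \<le> int k \<and> \<bar>snd b - snd a\<bar> \<le> int k"
  using assms(2)
proof (induction k arbitrary: b)
  case (Suc k)
  then obtain c where c: "(a, c) \<in> R ^^ k" "(c, b) \<in> R" by auto
  then have "tri_adj c b" using assms(1) by auto
  then have "\<bar>fst b - fst c\<bar> \<le> 1 \<and> \<bar>snd b - snd c\<bar> \<le> 1" by (cases b; cases c) (auto simp: tri_adj_iff)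
  then show ?case using Suc.IH[OF c(1)] by (simp add: abs_le_iff)
qed simp

lemma finite_Omega: "finite (Omega n)"
proof -
  define K where "K = int (n * n)"
  define B where "B = {-K..K} \<times> {-K..K}"
  have "Omega n \<subseteq> translation_class ` Pow B"
  proof
    fix C assume "C \<in> Omega n"
    then obtain S where C: "C = translation_class S" and fin: "finite S" and cS: "card S = n"
      and conn: "conf_connected S" unfolding Omega_eq by blast
    show "C \<in> translation_class ` Pow B"
    proof (cases "S = {}")
      case True then show ?thesis using C by blast
    next
      case False
      then obtain x0 where x0: "x0 \<in> S" by blast
      define t where "t = (- fst x0, - snd x0)"
      have "card (darts S) \<le> card (S \<times> S)"
        using fin by (intro card_mono) (auto simp: darts_def)
      then have cD: "card (darts S) \<le> n * n" using cS by (simp add: card_cartesian_product)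
      have "translate t S \<subseteq> B"
      proof
        fix y assume "y \<in> translate t S"
        then obtain v where v: "v \<in> S" "y = vadd v t" unfolding translate_def by auto
        have "(x0, v) \<in> (darts S)\<^sup>*" using conn x0 v by (simp add: conf_connected_darts)
        then obtain k where k: "k \<le> card (darts S)" "(x0, v) \<in> darts S ^^ k"
          using rtrancl_finite_eq_relpow[OF finite_darts[OF fin]] by blast
        have "\<bar>fst v - fst x0\<bar> \<le> int k \<and> \<bar>snd v - snd x0\<bar> \<le> int k"
          by (rule relpow_tri_adj_dist[OF _ k(2)]) (auto simp: darts_def)
        moreover have "int k \<le> K" using k(1) cD unfolding K_def by linarith
        ultimately show "y \<in> B" unfolding B_def v t_def by (auto simp: vadd_def)
      qed
      then show ?thesis using C translation_class_translate by blast
    qed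
  qed
  moreover have "finite (translation_class ` Pow B)" unfolding B_def by simp
  ultimately show ?thesis by (rule finite_subset)
qed

lemma sum_inverse_powers_ge:
  fixes lam :: real and f :: "'a \<Rightarrow> nat"
  assumes "finite A" "F \<subseteq> A" "lam \<ge> 1" "\<And>C. C \<in> F \<Longrightarrow> f C \<le> p"
  shows "card F / lam ^ p \<le> (\<Sum>C\<in>A. 1 / lam ^ f C)"
proof -
  have "card F / lam ^ p = (\<Sum>C\<in>F. 1 / lam ^ p)" by simp
  also have "\<dots> \<le> (\<Sum>C\<in>F. 1 / lam ^ f C)"
    using assms(3,4) by (intro sum_mono divide_left_mono power_increasing) auto
  also have "\<dots> \<le> (\<Sum>C\<in>A. 1 / lam ^ f C)"
    using assms(1-3) by (intro sum_mono2) auto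
  finally show ?thesis .
qed

lemma power_1_67_bound:
  fixes lam :: real assumes "lam > 0"
  shows "0.12 * (1.67 / lam) ^ (2 * m) \<le> 3 ^ m / lam ^ (2 * m)"
proof -
  have "(1.67::real) ^ (2 * m) = (1.67 ^ 2) ^ m" by (simp add: power_mult)
  also have "\<dots> \<le> 3 ^ m" by (rule power_mono) (auto simp: power2_eq_square)
  finally have "(1.67::real) ^ (2 * m) \<le> 3 ^ m" .
  moreover have "0.12 * (1.67::real) ^ (2 * m) \<le> 1.67 ^ (2 * m)" by (intro mult_left_le_one_le) auto
  ultimately have bound: "0.12 * (1.67::real) ^ (2 * m) \<le> 3 ^ m" by linarith
  have "0.12 * (1.67 / lam) ^ (2 * m) = 0.12 * 1.67 ^ (2 * m) / lam ^ (2 * m)"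
    by (simp only: power_divide times_divide_eq_right)
  also have "\<dots> \<le> 3 ^ m / lam ^ (2 * m)" using bound assms by (intro divide_right_mono) auto
  finally show ?thesis .
qed

definition column_tree_classes :: "nat \<Rightarrow> vertex set set set" where
  "column_tree_classes m =
     (\<lambda>w. translation_class (column_tree w)) ` {w. set w \<subseteq> {..2} \<and> length w = m}"

lemma card_column_tree_classes: "card (column_tree_classes m) = 3 ^ m"
proof -
  have "inj_on (\<lambda>w. translation_class (column_tree w)) {w. set w \<subseteq> {..2} \<and> length w = m}"
  proof (rule inj_onI)
    fix w1 w2 assume w: "w1 \<in> {w. set w \<subseteq> {..2} \<and> length w = m}" "w2 \<in> {w. set w \<subseteq> {..2} \<and> length w = m}"
      and "translation_class (column_tree w1) = translation_class (column_tree w2)"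
    then have "column_tree w1 = column_tree w2"
      by (intro translation_class_eq_normalised) (simp_all add: column_tree_facts)
    then show "w1 = w2" using w by (intro column_tree_inj) auto
  qed
  then show ?thesis by (simp add: column_tree_classes_def card_image card_lists_length_eq)
qed

lemma column_tree_classes_subset_Omega: "column_tree_classes m \<subseteq> Omega (Suc m)"
proof
  fix C assume "C \<in> column_tree_classes m"
  then obtain w where "length w = m" "C = translation_class (column_tree w)"
    by (auto simp: column_tree_classes_def)
  then show "C \<in> Omega (Suc m)" unfolding Omega_eq using column_tree_facts[of w] by auto
qed

lemma perim_class_column_tree_classes:
  assumes "C \<in> column_tree_classes m" shows "perim_class C \<le> 2 * m"
proof -
  obtain w where "length w = m" "C = translation_class (column_tree w)"
    using assms by (auto simp: column_tree_classes_def)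
  then show ?thesis using perim_class_le_card_darts[of "column_tree w"] column_tree_facts[of w] by simp
qed

theorem lemma19:
  fixes lam :: real and n :: nat
  assumes "lam \<ge> 1" and "n \<ge> 1"
  shows "(\<Sum>C\<in>Omega n. 1 / lam ^ perim_class C) \<ge> 0.12 * (1.67 / lam) ^ (2 * n - 2)"
proof -
  obtain m where n: "n = Suc m" using assms(2) by (cases n) auto
  have "0.12 * (1.67 / lam) ^ (2 * n - 2) \<le> 3 ^ m / lam ^ (2 * m)"
    using power_1_67_bound[of lam m] assms(1) by (simp add: n)
  also have "\<dots> = card (column_tree_classes m) / lam ^ (2 * m)"
    by (simp add: card_column_tree_classes)
  also have "\<dots> \<le> (\<Sum>C\<in>Omega n. 1 / lam ^ perim_class C)"
    unfolding n using finite_Omega column_tree_classes_subset_Omega assms(1) perim_class_column_tree_classes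
    by (rule sum_inverse_powers_ge)
  finally show ?thesis .
qed

end
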